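(* Consider the partial-block protocol described in the context, on a finite set of agents $A$ with a connected undirected connectivity graph $G=(A,E)$ and block length $L$. If at some epoch $t$ a deadlock occurs, i.e. $D(i)$ holds for every $i\in A$, then every agent's partial block contains its own ID: $i\in pb_i^{(t)}$ for all $i\in A$.
   Context: Let $A$ be a finite set of agents (agent IDs) and $G=(A,E)$ a connected undirected graph; $\Gamma_i$ denotes the set of neighbors of $i$. Fix an integer $L\ge 1$ (block length). Each agent $i$ maintains a partial block $pb_i\subseteq A$ (a set of agent IDs). The system runs in epochs $t=0,1,2,\dots$; $pb_i^{(t)}$ is agent $i$'s partial block at the start of epoch $t$. In each epoch: (C1) every agent $i$ with $i\notin pb_i$ adds $i$ to $pb_i$; (C2) every agent $i$ sends its $pb_i$ to every neighbor $j\in\Gamma_i$. When an agent $i$ receives a partial block $P$ (from a neighbor or via a direct message) it applies the rule: (R1) if $|P\setminus\{i\}|>|pb_i\setminus\{i\}|$, agent $i$ sets $pb_i:=P$; (R2) otherwise, if $|P\setminus\{i\}|=|pb_i\setminus\{i\}|$ and $P\neq pb_i$, agent $i$ sends its current $pb_i$ directly to every agent in $P\setminus pb_i$, each of which processes it by the same rule; (R3) otherwise the received block is discarded. All received partial blocks are assumed to pass all validity and similarity checks. For an agent $i$ and epoch $t$, the predicate $D(i)$ means: $pb_i^{(t)}=pb_i^{(t+1)}$ and $|pb_i^{(t)}|<L$. A deadlock at epoch $t$ means that $D(i)$ holds for all $i\in A$. *)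

theory Defs
  imports Main "HOL-Library.Multiset"
begin

definition conn_graph :: "'a set \<Rightarrow> ('a \<Rightarrow> 'a \<Rightarrow> bool) \<Rightarrow> bool" where
  "conn_graph A E \<longleftrightarrow> finite A \<and> A \<noteq> {} \<and>
     (\<forall>u v. E u v \<longrightarrow> u \<in> A \<and> v \<in> A \<and> u \<noteq> v \<and> E v u) \<and>
     (\<forall>u\<in>A. \<forall>v\<in>A. E\<^sup>*\<^sup>* u v)"

definition neighbors :: "'a set \<Rightarrow> ('a \<Rightarrow> 'a \<Rightarrow> bool) \<Rightarrow> 'a \<Rightarrow> 'a set" where
  "neighbors A E i = {j \<in> A. E i j}"

text \<open>A message in transit: (recipient, partial block).  One delivery step: a pending
  message (j,P) is processed by agent j according to rules R1, R2, R3.\<close>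
inductive deliver :: "('a \<Rightarrow> 'a set) \<times> ('a \<times> 'a set) multiset
                   \<Rightarrow> ('a \<Rightarrow> 'a set) \<times> ('a \<times> 'a set) multiset \<Rightarrow> bool" where
  R1: "(j, P) \<in># M \<Longrightarrow> card (P - {j}) > card (pb j - {j}) \<Longrightarrow>
       deliver (pb, M) (pb(j := P), M - {#(j, P)#})"
| R2: "(j, P) \<in># M \<Longrightarrow> card (P - {j}) = card (pb j - {j}) \<Longrightarrow> P \<noteq> pb j \<Longrightarrow>
       deliver (pb, M) (pb, (M - {#(j, P)#}) + image_mset (\<lambda>k. (k, pb j)) (mset_set (P - pb j)))"
| R3: "(j, P) \<in># M \<Longrightarrow> card (P - {j}) < card (pb j - {j}) \<or> P = pb j \<Longrightarrow>
       deliver (pb, M) (pb, M - {#(j, P)#})"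

definition after_C1 :: "'a set \<Rightarrow> ('a \<Rightarrow> 'a set) \<Rightarrow> 'a \<Rightarrow> 'a set" where
  "after_C1 A pb = (\<lambda>i. if i \<in> A then insert i (pb i) else pb i)"

definition C2_msgs :: "'a set \<Rightarrow> ('a \<Rightarrow> 'a \<Rightarrow> bool) \<Rightarrow> ('a \<Rightarrow> 'a set) \<Rightarrow> ('a \<times> 'a set) multiset" where
  "C2_msgs A E pb = (\<Sum>i\<in>A. image_mset (\<lambda>j. (j, pb i)) (mset_set (neighbors A E i)))"

definition epoch :: "'a set \<Rightarrow> ('a \<Rightarrow> 'a \<Rightarrow> bool) \<Rightarrow> ('a \<Rightarrow> 'a set) \<Rightarrow> ('a \<Rightarrow> 'a set) \<Rightarrow> bool" where
  "epoch A E pb pb' \<longleftrightarrow>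
     deliver\<^sup>*\<^sup>* (after_C1 A pb, C2_msgs A E (after_C1 A pb)) (pb', {#})"

text \<open>A run: pbs t is the family of partial blocks at the start of epoch t.\<close>
definition run :: "'a set \<Rightarrow> ('a \<Rightarrow> 'a \<Rightarrow> bool) \<Rightarrow> (nat \<Rightarrow> 'a \<Rightarrow> 'a set) \<Rightarrow> bool" where
  "run A E pbs \<longleftrightarrow> (\<forall>t. epoch A E (pbs t) (pbs (Suc t)))"

definition D :: "nat \<Rightarrow> (nat \<Rightarrow> 'a \<Rightarrow> 'a set) \<Rightarrow> nat \<Rightarrow> 'a \<Rightarrow> bool" where
  "D L pbs t i \<longleftrightarrow> pbs t i = pbs (Suc t) i \<and> card (pbs t i) < L"

definition deadlock :: "'a set \<Rightarrow> nat \<Rightarrow> (nat \<Rightarrow> 'a \<Rightarrow> 'a set) \<Rightarrow> nat \<Rightarrow> bool" where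
  "deadlock A L pbs t \<longleftrightarrow> (\<forall>i\<in>A. D L pbs t i)"

end

theory Submission
  imports Defs
begin

text \<open>Measure a partial block of agent i by card (P - {i}). Rule R1 is the only one that
  changes a block, and only by strictly increasing this measure; C1 changes the block of i
  without changing it. So if i were missing from its block at a deadlock, C1 would insert it
  and no delivery could restore the old block, contradicting D(i).\<close>

lemma deliver_block_eq_or_grows:
  assumes "deliver s s'"
  shows "fst s' i = fst s i \<or> card (fst s i - {i}) < card (fst s' i - {i})"
  using assms by cases auto

lemma deliver_rtranclp_block_eq_or_grows:
  assumes "deliver\<^sup>*\<^sup>* s s'"
  shows "fst s' i = fst s i \<or> card (fst s i - {i}) < card (fst s' i - {i})"
  using assms
proof (induction rule: rtranclp_induct)
  case (step s' s'')
  then show ?case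
    using deliver_block_eq_or_grows[OF step.hyps(2), of i] by auto
qed simp

lemma epoch_block_eq_or_grows:
  assumes "epoch A E pb pb'" and "i \<in> A"
  shows "pb' i = insert i (pb i) \<or> card (pb i - {i}) < card (pb' i - {i})"
proof -
  have "deliver\<^sup>*\<^sup>* (after_C1 A pb, C2_msgs A E (after_C1 A pb)) (pb', {#})"
    using assms(1) by (simp add: epoch_def)
  moreover have "after_C1 A pb i = insert i (pb i)"
    using assms(2) by (simp add: after_C1_def)
  ultimately show ?thesis
    using deliver_rtranclp_block_eq_or_grows[of _ "(pb', {#})" i] by fastforce
qed

lemma epoch_block_unchanged_imp_own_id:
  assumes "epoch A E pb pb'" and "i \<in> A" and "pb' i = pb i"
  shows "i \<in> pb i"
  using epoch_block_eq_or_grows[OF assms(1,2)] assms(3) by auto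

theorem lemma1:
  fixes A :: "'a set" and E :: "'a \<Rightarrow> 'a \<Rightarrow> bool" and L :: nat
    and pbs :: "nat \<Rightarrow> 'a \<Rightarrow> 'a set" and t :: nat
  assumes "conn_graph A E" and "L \<ge> 1"
    and "\<forall>s. \<forall>i\<in>A. pbs s i \<subseteq> A"
    and "run A E pbs"
    and "deadlock A L pbs t"
  shows "\<forall>i\<in>A. i \<in> pbs t i"
proof
  fix i assume "i \<in> A"
  have "epoch A E (pbs t) (pbs (Suc t))"
    using assms(4) by (simp add: run_def)
  moreover note \<open>i \<in> A\<close>
  moreover have "pbs (Suc t) i = pbs t i"
    using assms(5) \<open>i \<in> A\<close> by (simp add: deadlock_def D_def)
  ultimately show "i \<in> pbs t i"
    by (rule epoch_block_unchanged_imp_own_id)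
qed

end
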